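(* Let $R>r>0$ and let $\mathcal{K}^*_{\partial\Omega}$ be the Neumann–Poincaré operator on the Hilbert space $K^{-1/2}_0$ as described in the context. Then $\mathcal{K}^*_{\partial\Omega}$ has only absolutely continuous spectrum, and its spectrum is $[-1/2,1/2]$.
   Context: Identify $\mathbb{R}^2$ with $\mathbb{C}$; for $a\in\mathbb{R}\setminus\{0\}$ let $B_a$ be the open disk of radius $|a|$ centered at $(a,0)$. Fix $R>r>0$, let $\Omega=B_R\setminus\overline{B_r}$ (crescent domain), and put $q=\frac{1}{2r}-\frac{1}{2R}>0$. For $k\neq0$ let $\mathbb{S}(k)=\frac{1}{2|k|}\mathrm{diag}(1-e^{-|k|q},\,1+e^{-|k|q})$ and $\mathbb{K}(k)=\frac12e^{-|k|q}\mathrm{diag}(-1,1)$. $K^{-1/2}_0$ is the Hilbert space of pairs $\hat\varphi=(\hat\varphi_1,\hat\varphi_2)^T$ of measurable complex functions on $\mathbb{R}$ (mod a.e.) with $\int_{\mathbb{R}}\hat\varphi^T\mathbb{S}\overline{\hat\varphi}\,dk<\infty$, inner product $\langle\psi,\varphi\rangle_{-1/2}=\int_{\mathbb{R}}\hat\psi^T\mathbb{S}\overline{\hat\varphi}\,dk$. (In the paper such a pair represents the boundary density $\varphi=U^{-1}P\hat\varphi$ on $\partial\Omega$, with $P=\frac1{\sqrt2}\begin{bmatrix}-1&1\\1&1\end{bmatrix}$ and $U$ the Fourier transform of the density pulled back by $z\mapsto1/z$ to the two vertical lines bounding the image strip.) The Neumann–Poincaré operator $\mathcal{K}^*_{\partial\Omega}$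 on $K^{-1/2}_0$ is the multiplication operator $\hat\varphi\mapsto\mathbb{K}\hat\varphi$. *)

theory Defs
  imports "HOL-Analysis.Analysis" "HOL-Probability.Probability"
begin

text \<open>Crescent domain between B_R and B_r, R > r > 0; parameter q = 1/(2r) - 1/(2R).
  Elements of K^{-1/2}_0 are represented by pairs of complex functions on the real line,
  identified modulo Lebesgue-a.e. equality.\<close>

definition crescent_q :: "real \<Rightarrow> real \<Rightarrow> real" where
  "crescent_q r R = 1 / (2 * r) - 1 / (2 * R)"

text \<open>Diagonal entries of the weight matrix S(k) (k \<noteq> 0; the value at k = 0 is irrelevant).\<close>
definition S1 :: "real \<Rightarrow> real \<Rightarrow> real \<Rightarrow> real" where
  "S1 r R k = (1 - exp (- \<bar>k\<bar> * crescent_q r R)) / (2 * \<bar>k\<bar>)"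

definition S2 :: "real \<Rightarrow> real \<Rightarrow> real \<Rightarrow> real" where
  "S2 r R k = (1 + exp (- \<bar>k\<bar> * crescent_q r R)) / (2 * \<bar>k\<bar>)"

definition K1 :: "real \<Rightarrow> real \<Rightarrow> real \<Rightarrow> real" where
  "K1 r R k = - (1/2) * exp (- \<bar>k\<bar> * crescent_q r R)"

definition K2 :: "real \<Rightarrow> real \<Rightarrow> real \<Rightarrow> real" where
  "K2 r R k = (1/2) * exp (- \<bar>k\<bar> * crescent_q r R)"

definition Sform :: "real \<Rightarrow> real \<Rightarrow> (real \<Rightarrow> complex \<times> complex) \<Rightarrow> real \<Rightarrow> real" where
  "Sform r R \<phi> k = S1 r R k * (cmod (fst (\<phi> k)))\<^sup>2 + S2 r R k * (cmod (snd (\<phi> k)))\<^sup>2"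

definition Kspace :: "real \<Rightarrow> real \<Rightarrow> (real \<Rightarrow> complex \<times> complex) set" where
  "Kspace r R = {\<phi>. \<phi> \<in> borel_measurable lborel \<and> integrable lborel (Sform r R \<phi>)}"

definition Kinner :: "real \<Rightarrow> real \<Rightarrow> (real \<Rightarrow> complex \<times> complex) \<Rightarrow> (real \<Rightarrow> complex \<times> complex) \<Rightarrow> complex" where
  "Kinner r R \<psi> \<phi> = integral\<^sup>L lborel (\<lambda>k.
      complex_of_real (S1 r R k) * fst (\<psi> k) * cnj (fst (\<phi> k))
    + complex_of_real (S2 r R k) * snd (\<psi> k) * cnj (snd (\<phi> k)))"

text \<open>(K* - lambda I) applied to a representative: multiplication by diag(K1 - lambda, K2 - lambda).
  For lambda = 0 this is the Neumann-Poincare operator itself.\<close>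
definition NP_shift :: "real \<Rightarrow> real \<Rightarrow> complex \<Rightarrow> (real \<Rightarrow> complex \<times> complex) \<Rightarrow> (real \<Rightarrow> complex \<times> complex)" where
  "NP_shift r R c \<phi> = (\<lambda>k. ((complex_of_real (K1 r R k) - c) * fst (\<phi> k),
                              (complex_of_real (K2 r R k) - c) * snd (\<phi> k)))"

text \<open>Spectrum of the (bounded) operator K* on K^{-1/2}_0: lambda is in the resolvent set iff
  K* - lambda I is a bijection of the space (bounded inverse is automatic by the open mapping
  theorem); elements are compared modulo a.e. equality.\<close>
definition NP_spectrum :: "real \<Rightarrow> real \<Rightarrow> complex set" where
  "NP_spectrum r R = {c. \<not> (
      (\<forall>\<psi>\<in>Kspace r R. \<exists>\<phi>\<in>Kspace r R. AE k in lborel. NP_shift r R c \<phi> k = \<psi> k)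
    \<and> (\<forall>\<phi>\<in>Kspace r R. (AE k in lborel. NP_shift r R c \<phi> k = (0, 0))
                          \<longrightarrow> (AE k in lborel. \<phi> k = (0, 0))))}"

text \<open>Purely absolutely continuous spectrum: for every phi, the spectral measure mu_phi of the
  self-adjoint operator K* w.r.t. phi (characterised as the finite Borel measure whose Borel-Stieltjes
  transform is the resolvent matrix element: <(K* - z)^{-1} phi, phi> = integral 1/(t - z) d mu_phi(t)
  for all non-real z) is absolutely continuous w.r.t. Lebesgue measure.\<close>
definition NP_purely_ac :: "real \<Rightarrow> real \<Rightarrow> bool" where
  "NP_purely_ac r R = (\<forall>\<phi>\<in>Kspace r R. \<exists>\<mu> :: real measure.
      sets \<mu> = sets borel \<and> finite_measure \<mu> \<and> absolutely_continuous lborel \<mu> \<and>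
      (\<forall>z \<psi>. Im z \<noteq> 0 \<longrightarrow> \<psi> \<in> Kspace r R \<longrightarrow>
          (AE k in lborel. NP_shift r R z \<psi> k = \<phi> k) \<longrightarrow>
          Kinner r R \<psi> \<phi> = integral\<^sup>L \<mu> (\<lambda>t. 1 / (complex_of_real t - z))))"

end

theory Submission
  imports Defs
begin

text \<open>In the Fourier picture the Neumann-Poincare operator is multiplication by diag(K1, K2) on a
  weighted L2 space, so its spectrum is the closure of the range of the symbol: K1 = -exp(-q|k|)/2
  and K2 = exp(-q|k|)/2 sweep out [-1/2, 0) and (0, 1/2]. A value t = K_i(k0) lies in the spectrum
  because K_i - t vanishes only linearly at k0, so a test function whose weighted density is the
  indicator of (k0, k0 + 1] has no preimage: the candidate would have density of order
  (k - k0)^(-2). The value 0 is attained only at infinity, where K1 decays exponentially. Off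
  [-1/2, 1/2] the symbol stays at positive distance from the spectral parameter and division by it
  is bounded.

  The spectral measure of phi is the push-forward of S1 |phi1|^2 dk + S2 |phi2|^2 dk under the
  symbol. On each half-line the symbol has a differentiable inverse, so preimages of null sets are
  null and the spectral measure is absolutely continuous.\<close>

lemma measurable_fst_snd [measurable (raw)]:
  fixes \<phi> :: "'a \<Rightarrow> 'b::topological_space \<times> 'c::topological_space"
  assumes "\<phi> \<in> borel_measurable M"
  shows "(\<lambda>x. fst (\<phi> x)) \<in> borel_measurable M" "(\<lambda>x. snd (\<phi> x)) \<in> borel_measurable M"
  using measurable_compose[OF assms borel_measurable_continuous_onI,
      OF continuous_on_fst[OF continuous_on_id]]
    measurable_compose[OF assms borel_measurable_continuous_onI,
      OF continuous_on_snd[OF continuous_on_id]]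
  by auto

lemma measurable_cnj [measurable (raw)]:
  assumes "f \<in> borel_measurable M"
  shows "(\<lambda>x. cnj (f x)) \<in> borel_measurable M"
  using measurable_compose[OF assms borel_measurable_continuous_onI,
      OF continuous_on_cnj[OF continuous_on_id]]
  by simp

lemma integrable_add_nonneg_iff:
  fixes f g :: "'a \<Rightarrow> real"
  assumes "f \<in> borel_measurable M" "g \<in> borel_measurable M" "\<And>x. 0 \<le> f x" "\<And>x. 0 \<le> g x"
  shows "integrable M (\<lambda>x. f x + g x) \<longleftrightarrow> integrable M f \<and> integrable M g"
proof
  assume fg: "integrable M (\<lambda>x. f x + g x)"
  show "integrable M f \<and> integrable M g"
    using assms by (auto intro!: Bochner_Integration.integrable_bound[OF fg])
qed auto

lemma integrable_scaleR_bounded: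
  fixes w :: "'b \<Rightarrow> real" and f :: "'b \<Rightarrow> 'a::{banach, second_countable_topology}"
  assumes w: "integrable M w" and f: "f \<in> borel_measurable M" and bound: "\<And>x. norm (f x) \<le> B"
  shows "integrable M (\<lambda>x. w x *\<^sub>R f x)"
proof (rule Bochner_Integration.integrable_bound)
  show "integrable M (\<lambda>x. B * \<bar>w x\<bar>)"
    using w by (intro integrable_mult_right integrable_abs)
  show "(\<lambda>x. w x *\<^sub>R f x) \<in> borel_measurable M"
    by (intro borel_measurable_scaleR borel_measurable_integrable[OF w] f)
  have "norm (w x *\<^sub>R f x) \<le> norm (B * \<bar>w x\<bar>)" for x
  proof -
    have "\<bar>w x\<bar> * norm (f x) \<le> \<bar>w x\<bar> * B"
      by (intro mult_left_mono bound) simp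
    also have "\<dots> \<le> \<bar>w x\<bar> * \<bar>B\<bar>"
      by (intro mult_left_mono) simp_all
    finally show ?thesis
      by (simp add: abs_mult mult.commute)
  qed
  then show "AE x in M. norm (w x *\<^sub>R f x) \<le> norm (B * \<bar>w x\<bar>)"
    by simp
qed

lemma integrable_weighted_divide:
  fixes S :: "'a \<Rightarrow> real" and \<psi> d :: "'a \<Rightarrow> complex"
  assumes int: "integrable M (\<lambda>x. S x * (cmod (\<psi> x))\<^sup>2)"
    and meas: "(\<lambda>x. S x * (cmod (\<psi> x / d x))\<^sup>2) \<in> borel_measurable M"
    and S: "\<And>x. 0 \<le> S x" and \<delta>: "0 < \<delta>" "\<And>x. \<delta> \<le> cmod (d x)"
  shows "integrable M (\<lambda>x. S x * (cmod (\<psi> x / d x))\<^sup>2)"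
proof (rule Bochner_Integration.integrable_bound[OF integrable_divide[OF int, of "\<delta>\<^sup>2"] meas])
  show "AE x in M. norm (S x * (cmod (\<psi> x / d x))\<^sup>2) \<le> norm (S x * (cmod (\<psi> x))\<^sup>2 / \<delta>\<^sup>2)"
  proof (intro AE_I2)
    fix x
    have "(cmod (\<psi> x / d x))\<^sup>2 \<le> (cmod (\<psi> x) / \<delta>)\<^sup>2"
      using \<delta>(1) \<delta>(2)[of x]
      by (auto simp: norm_divide intro!: power_mono divide_left_mono mult_pos_pos)
    then show "norm (S x * (cmod (\<psi> x / d x))\<^sup>2) \<le> norm (S x * (cmod (\<psi> x))\<^sup>2 / \<delta>\<^sup>2)"
      using S[of x] mult_left_mono by (fastforce simp: power_divide)
  qed
qed

lemma not_integrable_weighted_quotient: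
  fixes S :: "'a \<Rightarrow> real" and \<phi> \<psi> d :: "'a \<Rightarrow> complex"
  assumes eq: "AE x in M. d x * \<phi> x = \<psi> x"
    and not_int: "\<not> integrable M (\<lambda>x. S x * (cmod (\<psi> x))\<^sup>2 / (cmod (d x))\<^sup>2)"
    and meas: "(\<lambda>x. S x * (cmod (\<psi> x))\<^sup>2 / (cmod (d x))\<^sup>2) \<in> borel_measurable M"
    and S: "\<And>x. 0 \<le> S x"
  shows "\<not> integrable M (\<lambda>x. S x * (cmod (\<phi> x))\<^sup>2)"
proof
  assume "integrable M (\<lambda>x. S x * (cmod (\<phi> x))\<^sup>2)"
  moreover have "AE x in M.
      norm (S x * (cmod (\<psi> x))\<^sup>2 / (cmod (d x))\<^sup>2) \<le> norm (S x * (cmod (\<phi> x))\<^sup>2)"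
    using eq
  proof eventually_elim
    case (elim x)
    then show ?case
      using S[of x] by (cases "d x = 0") (auto simp flip: elim simp: norm_mult power_mult_distrib)
  qed
  ultimately show False
    using not_int meas by (blast intro: Bochner_Integration.integrable_bound)
qed

lemma not_integrable_unbounded_minorants:
  fixes f :: "'a \<Rightarrow> real"
  assumes "\<And>n::nat. \<exists>g. integrable M g \<and> (AE x in M. g x \<le> f x) \<and> real n \<le> integral\<^sup>L M g"
  shows "\<not> integrable M f"
proof
  assume f: "integrable M f"
  obtain n :: nat where n: "integral\<^sup>L M f < n"
    using reals_Archimedean2 by blast
  obtain g where "integrable M g" "AE x in M. g x \<le> f x" "real n \<le> integral\<^sup>L M g"
    using assms by blast
  moreover from this f have "integral\<^sup>L M g \<le> integral\<^sup>L M f"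
    by (intro integral_mono_AE)
  ultimately show False
    using n by linarith
qed

lemma not_integrable_inverse_square_at:
  fixes f :: "real \<Rightarrow> real"
  assumes "0 < L" and near: "\<And>k. k0 < k \<Longrightarrow> k \<le> k0 + 1 \<Longrightarrow> f k \<noteq> 0 \<and> \<bar>f k\<bar> \<le> L * (k - k0)"
  shows "\<not> integrable lborel (\<lambda>k. indicator {k0<..k0 + 1} k / (f k)\<^sup>2)"
proof (rule not_integrable_unbounded_minorants)
  fix n :: nat
  obtain m :: nat where m: "max 1 (n * L\<^sup>2) \<le> m"
    using real_arch_simple by blast
  then have "1 \<le> real m" "n \<le> m / L\<^sup>2"
    using \<open>0 < L\<close> by (auto simp: field_simps)
  define g where "g k = (m / L)\<^sup>2 * indicator {k0<..k0 + 1 / m} k" for k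
  have "g k \<le> indicator {k0<..k0 + 1} k / (f k)\<^sup>2" for k
  proof (cases "k \<in> {k0<..k0 + 1 / m}")
    case True
    with \<open>1 \<le> real m\<close> have "k0 < k" "k \<le> k0 + 1"
      by (auto simp: divide_le_eq_1 intro: order_trans)
    have "\<bar>f k\<bar> \<le> L * (k - k0)"
      using near \<open>k0 < k\<close> \<open>k \<le> k0 + 1\<close> by blast
    also have "\<dots> \<le> L * (1 / m)"
      using True \<open>0 < L\<close> by (intro mult_left_mono) auto
    finally have "\<bar>f k\<bar> \<le> L / m"
      by simp
    then have "(f k)\<^sup>2 \<le> (L / m)\<^sup>2"
      by (metis abs_ge_zero power2_abs power_mono)
    moreover have "f k \<noteq> 0"
      using near \<open>k0 < k\<close> \<open>k \<le> k0 + 1\<close> by blast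
    ultimately have "(m / L)\<^sup>2 \<le> 1 / (f k)\<^sup>2"
      using \<open>0 < L\<close> \<open>1 \<le> real m\<close> by (simp add: power_divide field_simps)
    then show ?thesis
      using True \<open>k0 < k\<close> \<open>k \<le> k0 + 1\<close> by (simp add: g_def)
  qed (simp add: g_def)
  moreover have "integrable lborel g" "integral\<^sup>L lborel g = m / L\<^sup>2"
    using \<open>1 \<le> real m\<close> unfolding g_def[abs_def] by (simp_all add: power2_eq_square)
  ultimately show "\<exists>g. integrable lborel g
      \<and> (AE k in lborel. g k \<le> indicator {k0<..k0 + 1} k / (f k)\<^sup>2) \<and> real n \<le> integral\<^sup>L lborel g"
    using \<open>n \<le> m / L\<^sup>2\<close> by auto
qed

lemma not_integrable_indicator_Ici: "\<not> integrable lborel (indicator {c..} :: real \<Rightarrow> real)"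
proof (rule not_integrable_unbounded_minorants)
  fix n :: nat
  show "\<exists>g. integrable lborel g \<and> (AE k in lborel. g k \<le> indicator {c..} k)
      \<and> real n \<le> integral\<^sup>L lborel g"
    by (intro exI[of _ "indicator {c..c + n}"]) (auto simp: indicator_def)
qed

lemma integrable_exp_minus_Ici:
  fixes a c :: real
  assumes "0 < a"
  shows "integrable lborel (\<lambda>k. indicator {c..} k * exp (- a * k))"
proof -
  have "(\<lambda>k. exp (- a * k)) absolutely_integrable_on {c..}"
    using assms
    by (intro nonnegative_absolutely_integrable_1 integrable_on_exp_minus_to_infinity) auto
  then have "integrable lebesgue (\<lambda>k. indicator {c..} k * exp (- a * k))"
    by (simp add: set_integrable_def)
  then show ?thesis
    by (subst (asm) integrable_completion) measurable
qed

lemma integrable_lborel_reflect: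
  fixes g :: "real \<Rightarrow> 'a::{banach, second_countable_topology}"
  shows "integrable lborel (\<lambda>k. g (- k)) \<longleftrightarrow> integrable lborel g"
  using lborel_integrable_real_affine_iff[of "-1" g 0] by simp

lemma integral_lborel_reflect:
  fixes g :: "real \<Rightarrow> 'a::{banach, second_countable_topology}"
  shows "(\<integral>k. g (- k) \<partial>lborel) = integral\<^sup>L lborel g"
  using lborel_integral_real_affine[of "-1" g 0] by simp

lemma integrable_fold:
  fixes g :: "real \<Rightarrow> 'a::{banach, second_countable_topology}"
  assumes "integrable lborel g" "A \<in> sets borel"
  shows "integrable lborel (\<lambda>k. indicator A k *\<^sub>R (g k + g (- k)))"
  using assms
  by (intro integrable_mult_indicator integrable_add) (simp_all add: integrable_lborel_reflect)

lemma integral_fold_Ioi: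
  fixes g :: "real \<Rightarrow> 'a::{banach, second_countable_topology}"
  assumes g: "integrable lborel g"
  shows "(\<integral>k. indicator {0<..} k *\<^sub>R (g k + g (- k)) \<partial>lborel) = integral\<^sup>L lborel g"
proof -
  have g_reflect: "integrable lborel (\<lambda>k. g (- k))"
    using g by (simp add: integrable_lborel_reflect)
  have "(\<integral>k. indicator {0<..} k *\<^sub>R g (- k) \<partial>lborel) = (\<integral>k. indicator {0<..} (- k) *\<^sub>R g k \<partial>lborel)"
    using integral_lborel_reflect[of "\<lambda>k. indicator {0<..} (- k) *\<^sub>R g k"] by simp
  also have "\<dots> = (\<integral>k. indicator {..<0} k *\<^sub>R g k \<partial>lborel)"
    by (intro Bochner_Integration.integral_cong) (auto split: split_indicator)
  finally have "(\<integral>k. indicator {0<..} k *\<^sub>R (g k + g (- k)) \<partial>lborel)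
      = (\<integral>k. indicator {0<..} k *\<^sub>R g k \<partial>lborel) + (\<integral>k. indicator {..<0} k *\<^sub>R g k \<partial>lborel)"
    using g g_reflect by (simp add: scaleR_add_right integrable_mult_indicator)
  also have "\<dots> = (\<integral>k. indicator {0<..} k *\<^sub>R g k + indicator {..<0} k *\<^sub>R g k \<partial>lborel)"
    using g by (simp add: integrable_mult_indicator)
  also have "\<dots> = integral\<^sup>L lborel g"
    using AE_lborel_singleton[of 0] g
    by (intro integral_cong_AE) (auto elim!: eventually_mono split: split_indicator)
  finally show ?thesis .
qed

lemma integral_fold_Iio:
  fixes g :: "real \<Rightarrow> 'a::{banach, second_countable_topology}"
  assumes g: "integrable lborel g"
  shows "(\<integral>k. indicator {..<0} k *\<^sub>R (g k + g (- k)) \<partial>lborel) = integral\<^sup>L lborel g"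
proof -
  have "(\<integral>k. indicator {..<0} k *\<^sub>R (g k + g (- k)) \<partial>lborel)
      = (\<integral>k. indicator {..<0} (- k) *\<^sub>R (g (- k) + g k) \<partial>lborel)"
    using integral_lborel_reflect[of "\<lambda>k. indicator {..<0} k *\<^sub>R (g k + g (- k))"] by simp
  also have "\<dots> = (\<integral>k. indicator {0<..} k *\<^sub>R (g k + g (- k)) \<partial>lborel)"
    by (intro Bochner_Integration.integral_cong) (auto simp: add.commute split: split_indicator)
  finally show ?thesis
    using integral_fold_Ioi[OF g] by simp
qed

lemma negligible_vimage_left_inverse:
  fixes F :: "'a::euclidean_space \<Rightarrow> 'b::euclidean_space" and G :: "'b \<Rightarrow> 'a"
  assumes "DIM('b) \<le> DIM('a)" "negligible N"
    and inverse: "\<And>x. x \<in> A \<Longrightarrow> G (F x) = x" and diff: "G differentiable_on F ` A"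
  shows "negligible (A \<inter> F -` N)"
proof (rule negligible_subset)
  show "negligible (G ` (N \<inter> F ` A))"
    using assms(1,2) diff
    by (intro negligible_differentiable_image_negligible)
      (auto intro: negligible_subset differentiable_on_subset)
  show "A \<inter> F -` N \<subseteq> G ` (N \<inter> F ` A)"
    using inverse by (auto intro!: image_eqI[where x = "F _"])
qed

lemma exp_minus_diff_bounds:
  fixes q a b :: real
  assumes "0 < q" "0 \<le> a" "a < b"
  shows "0 < exp (- a * q) - exp (- b * q)" "exp (- a * q) - exp (- b * q) \<le> q * (b - a)"
proof -
  show "0 < exp (- a * q) - exp (- b * q)"
    using assms by simp
  have "exp (- a * q) - exp (- b * q) = exp (- a * q) * (1 - exp (- (q * (b - a))))"
    by (simp add: algebra_simps flip: exp_add)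
  also have "\<dots> \<le> 1 * (q * (b - a))"
    using assms exp_ge_add_one_self[of "- (q * (b - a))"] by (intro mult_mono) auto
  finally show "exp (- a * q) - exp (- b * q) \<le> q * (b - a)"
    by simp
qed

lemma cmod_of_real_diff_squared:
  "(cmod (complex_of_real a - complex_of_real b))\<^sup>2 = (a - b)\<^sup>2"
  by (metis norm_of_real of_real_diff power2_abs)

lemma weighted_norm_normalized:
  assumes "\<And>k. k \<in> A \<Longrightarrow> 0 < S k"
  shows "S k * (cmod (complex_of_real (indicator A k * b k / sqrt (S k))))\<^sup>2
    = indicator A k * (b k)\<^sup>2"
  using assms[of k] by (cases "k \<in> A") (simp_all add: norm_divide power_divide power_mult_distrib)

section \<open>The symbols and the weighted space\<close>

lemma measurable_symbols [measurable]:
  "K1 r R \<in> borel_measurable borel" "K2 r R \<in> borel_measurable borel"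
  "S1 r R \<in> borel_measurable borel" "S2 r R \<in> borel_measurable borel"
  unfolding K1_def K2_def S1_def S2_def by measurable

lemma K1_even: "K1 r R (- k) = K1 r R k"
  and K2_even: "K2 r R (- k) = K2 r R k"
  by (simp_all add: K1_def K2_def)

lemma K2_eq_uminus_K1: "K2 r R k = - K1 r R k"
  by (simp add: K1_def K2_def)

lemma abs_K1_le: "0 < crescent_q r R \<Longrightarrow> \<bar>K1 r R k\<bar> \<le> 1/2"
  and abs_K2_le: "0 < crescent_q r R \<Longrightarrow> \<bar>K2 r R k\<bar> \<le> 1/2"
  by (simp_all add: K1_def K2_def)

lemma K1_attains:
  assumes q: "0 < crescent_q r R" and t: "-1/2 \<le> t" "t < 0"
  shows "K1 r R (- ln (-2 * t) / crescent_q r R) = t"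
proof -
  have "0 \<le> - ln (-2 * t) / crescent_q r R"
    using q t by (simp add: divide_nonpos_pos)
  then show ?thesis
    using q t by (simp add: K1_def)
qed

lemma K2_attains:
  assumes q: "0 < crescent_q r R" and t: "0 < t" "t \<le> 1/2"
  shows "K2 r R (- ln (2 * t) / crescent_q r R) = t"
proof -
  have "0 \<le> - ln (2 * t) / crescent_q r R"
    using q t by (simp add: divide_nonpos_pos)
  then show ?thesis
    using q t by (simp add: K2_def)
qed

lemma S1_pos: "0 < crescent_q r R \<Longrightarrow> k \<noteq> 0 \<Longrightarrow> 0 < S1 r R k"
  by (simp add: S1_def)

lemma S2_pos: "k \<noteq> 0 \<Longrightarrow> 0 < S2 r R k"
  by (simp add: S2_def add_pos_pos)

lemma S1_nonneg: "0 < crescent_q r R \<Longrightarrow> 0 \<le> S1 r R k"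
  by (cases "k = 0") (auto simp: S1_def intro: less_imp_le S1_pos)

lemma S2_nonneg: "0 \<le> S2 r R k"
  by (cases "k = 0") (auto simp: S2_def intro: less_imp_le S2_pos)

definition Sform1 :: "real \<Rightarrow> real \<Rightarrow> (real \<Rightarrow> complex \<times> complex) \<Rightarrow> real \<Rightarrow> real" where
  "Sform1 r R \<phi> k = S1 r R k * (cmod (fst (\<phi> k)))\<^sup>2"

definition Sform2 :: "real \<Rightarrow> real \<Rightarrow> (real \<Rightarrow> complex \<times> complex) \<Rightarrow> real \<Rightarrow> real" where
  "Sform2 r R \<phi> k = S2 r R k * (cmod (snd (\<phi> k)))\<^sup>2"

lemma Sform_eq: "Sform r R \<phi> k = Sform1 r R \<phi> k + Sform2 r R \<phi> k"
  by (simp add: Sform_def Sform1_def Sform2_def)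

lemma measurable_Sform [measurable]:
  assumes [measurable]: "\<phi> \<in> borel_measurable borel"
  shows "Sform1 r R \<phi> \<in> borel_measurable borel" "Sform2 r R \<phi> \<in> borel_measurable borel"
  unfolding Sform1_def Sform2_def by measurable

lemma Sform1_nonneg: "0 < crescent_q r R \<Longrightarrow> 0 \<le> Sform1 r R \<phi> k"
  and Sform2_nonneg: "0 \<le> Sform2 r R \<phi> k"
  by (simp_all add: Sform1_def Sform2_def S1_nonneg S2_nonneg)

lemma Kspace_iff:
  assumes "0 < crescent_q r R"
  shows "\<phi> \<in> Kspace r R \<longleftrightarrow> \<phi> \<in> borel_measurable borel
    \<and> integrable lborel (Sform1 r R \<phi>) \<and> integrable lborel (Sform2 r R \<phi>)"
  using integrable_add_nonneg_iff[of "Sform1 r R \<phi>" lborel "Sform2 r R \<phi>"]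
  by (auto simp: Kspace_def Sform_eq[abs_def] Sform1_nonneg[OF assms] Sform2_nonneg)

section \<open>The spectrum\<close>

lemma not_in_NP_spectrum:
  assumes q: "0 < crescent_q r R" and \<delta>: "0 < \<delta>"
    and sep1: "\<And>k. \<delta> \<le> cmod (complex_of_real (K1 r R k) - c)"
    and sep2: "\<And>k. \<delta> \<le> cmod (complex_of_real (K2 r R k) - c)"
  shows "c \<notin> NP_spectrum r R"
proof -
  have nz1: "complex_of_real (K1 r R k) - c \<noteq> 0" and nz2: "complex_of_real (K2 r R k) - c \<noteq> 0" for k
    using sep1[of k] sep2[of k] \<delta> by auto
  have "\<exists>\<phi>\<in>Kspace r R. AE k in lborel. NP_shift r R c \<phi> k = \<psi> k" if \<psi>: "\<psi> \<in> Kspace r R" for \<psi>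
  proof
    define \<phi> where "\<phi> k = (fst (\<psi> k) / (complex_of_real (K1 r R k) - c),
      snd (\<psi> k) / (complex_of_real (K2 r R k) - c))" for k
    have [measurable]: "\<psi> \<in> borel_measurable borel"
      using \<psi> by (simp add: Kspace_def)
    have "integrable lborel (Sform1 r R \<psi>)" "integrable lborel (Sform2 r R \<psi>)"
      using \<psi> by (simp_all add: Kspace_iff[OF q])
    then have "integrable lborel (Sform1 r R \<phi>)" "integrable lborel (Sform2 r R \<phi>)"
      unfolding Sform1_def Sform2_def \<phi>_def fst_conv snd_conv
      by (auto intro!: integrable_weighted_divide[OF _ _ S1_nonneg[OF q] \<delta> sep1]
          integrable_weighted_divide[OF _ _ S2_nonneg \<delta> sep2])
    moreover have "\<phi> \<in> borel_measurable borel"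
      unfolding \<phi>_def by measurable
    ultimately show "\<phi> \<in> Kspace r R"
      by (simp add: Kspace_iff[OF q])
    show "AE k in lborel. NP_shift r R c \<phi> k = \<psi> k"
      using nz1 nz2 by (simp add: NP_shift_def \<phi>_def prod_eq_iff)
  qed
  moreover have "AE k in lborel. \<phi> k = (0, 0)"
    if "AE k in lborel. NP_shift r R c \<phi> k = (0, 0)" for \<phi>
    using that by eventually_elim (use nz1 nz2 in \<open>auto simp: NP_shift_def prod_eq_iff\<close>)
  ultimately show ?thesis
    unfolding NP_spectrum_def by blast
qed

lemma in_NP_spectrumI:
  assumes q: "0 < crescent_q r R" and \<psi>: "\<psi> \<in> Kspace r R"
    and unbounded:
      "\<not> integrable lborel (\<lambda>k. S1 r R k * (cmod (fst (\<psi> k)))\<^sup>2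
          / (cmod (complex_of_real (K1 r R k) - c))\<^sup>2)
     \<or> \<not> integrable lborel (\<lambda>k. S2 r R k * (cmod (snd (\<psi> k)))\<^sup>2
          / (cmod (complex_of_real (K2 r R k) - c))\<^sup>2)"
  shows "c \<in> NP_spectrum r R"
proof -
  have [measurable]: "\<psi> \<in> borel_measurable borel"
    using \<psi> by (simp add: Kspace_def)
  have "\<phi> \<notin> Kspace r R" if eq: "AE k in lborel. NP_shift r R c \<phi> k = \<psi> k" for \<phi>
  proof -
    have eq1: "AE k in lborel. (complex_of_real (K1 r R k) - c) * fst (\<phi> k) = fst (\<psi> k)"
      and eq2: "AE k in lborel. (complex_of_real (K2 r R k) - c) * snd (\<phi> k) = snd (\<psi> k)"
      using eq by (auto elim!: eventually_mono simp: NP_shift_def prod_eq_iff)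
    from unbounded show ?thesis
    proof (elim disjE)
      assume "\<not> integrable lborel (\<lambda>k. S1 r R k * (cmod (fst (\<psi> k)))\<^sup>2
        / (cmod (complex_of_real (K1 r R k) - c))\<^sup>2)"
      then have "\<not> integrable lborel (Sform1 r R \<phi>)"
        unfolding Sform1_def
        by (rule not_integrable_weighted_quotient[OF eq1 _ _ S1_nonneg[OF q]]) measurable
      then show ?thesis
        by (simp add: Kspace_iff[OF q])
    next
      assume "\<not> integrable lborel (\<lambda>k. S2 r R k * (cmod (snd (\<psi> k)))\<^sup>2
        / (cmod (complex_of_real (K2 r R k) - c))\<^sup>2)"
      then have "\<not> integrable lborel (Sform2 r R \<phi>)"
        unfolding Sform2_def
        by (rule not_integrable_weighted_quotient[OF eq2 _ _ S2_nonneg]) measurable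
      then show ?thesis
        by (simp add: Kspace_iff[OF q])
    qed
  qed
  then have "\<not> (\<forall>\<psi>\<in>Kspace r R. \<exists>\<phi>\<in>Kspace r R. AE k in lborel. NP_shift r R c \<phi> k = \<psi> k)"
    using \<psi> by blast
  then show ?thesis
    unfolding NP_spectrum_def by blast
qed

lemma not_integrable_inverse_square_K1:
  assumes q: "0 < crescent_q r R" and "0 \<le> k0"
  shows "\<not> integrable lborel (\<lambda>k. indicator {k0<..k0 + 1} k / (K1 r R k - K1 r R k0)\<^sup>2)"
proof (rule not_integrable_inverse_square_at)
  fix k assume "k0 < k" "k \<le> k0 + 1"
  have "K1 r R k - K1 r R k0 = (exp (- k0 * crescent_q r R) - exp (- k * crescent_q r R)) / 2"
    using \<open>0 \<le> k0\<close> \<open>k0 < k\<close> by (simp add: K1_def field_simps)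
  then show "K1 r R k - K1 r R k0 \<noteq> 0 \<and> \<bar>K1 r R k - K1 r R k0\<bar> \<le> crescent_q r R / 2 * (k - k0)"
    using exp_minus_diff_bounds[OF q \<open>0 \<le> k0\<close> \<open>k0 < k\<close>] by (simp only:) auto
qed (use q in simp)

lemma K1_in_NP_spectrum:
  assumes q: "0 < crescent_q r R"
  shows "complex_of_real (K1 r R k0) \<in> NP_spectrum r R"
proof -
  define A where "A = {\<bar>k0\<bar><..\<bar>k0\<bar> + 1}"
  define \<psi> where "\<psi> k = (complex_of_real (indicator A k * 1 / sqrt (S1 r R k)), 0 :: complex)" for k
  have Sform1_\<psi>: "Sform1 r R \<psi> k = indicator A k" for k
    unfolding Sform1_def \<psi>_def fst_conv
    by (subst weighted_norm_normalized) (auto simp: A_def intro: S1_pos[OF q])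
  have "\<psi> \<in> borel_measurable borel"
    unfolding \<psi>_def[abs_def] A_def by measurable
  moreover have "Sform2 r R \<psi> = (\<lambda>_. 0)"
    by (simp add: fun_eq_iff Sform2_def \<psi>_def)
  ultimately have \<psi>_in: "\<psi> \<in> Kspace r R"
    by (simp add: Kspace_iff[OF q] Sform1_\<psi>[abs_def] A_def)
  have "(cmod (of_real (K1 r R k) - of_real (K1 r R k0)))\<^sup>2 = (K1 r R k - K1 r R \<bar>k0\<bar>)\<^sup>2" for k
    unfolding cmod_of_real_diff_squared by (simp add: K1_def)
  then have quotient_eq: "S1 r R k * (cmod (fst (\<psi> k)))\<^sup>2
      / (cmod (of_real (K1 r R k) - of_real (K1 r R k0)))\<^sup>2 = indicator A k / (K1 r R k - K1 r R \<bar>k0\<bar>)\<^sup>2" for k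
    using Sform1_\<psi>[of k] by (simp add: Sform1_def)
  have "\<not> integrable lborel (\<lambda>k. indicator A k / (K1 r R k - K1 r R \<bar>k0\<bar>)\<^sup>2)"
    unfolding A_def by (rule not_integrable_inverse_square_K1[OF q abs_ge_zero])
  then show ?thesis
    by (intro in_NP_spectrumI[OF q \<psi>_in disjI1]) (unfold quotient_eq)
qed

lemma K2_in_NP_spectrum:
  assumes q: "0 < crescent_q r R"
  shows "complex_of_real (K2 r R k0) \<in> NP_spectrum r R"
proof -
  define A where "A = {\<bar>k0\<bar><..\<bar>k0\<bar> + 1}"
  define \<psi> where "\<psi> k = (0 :: complex, complex_of_real (indicator A k * 1 / sqrt (S2 r R k)))" for k
  have Sform2_\<psi>: "Sform2 r R \<psi> k = indicator A k" for k
    unfolding Sform2_def \<psi>_def snd_conv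
    by (subst weighted_norm_normalized) (auto simp: A_def intro: S2_pos)
  have "\<psi> \<in> borel_measurable borel"
    unfolding \<psi>_def[abs_def] A_def by measurable
  moreover have "Sform1 r R \<psi> = (\<lambda>_. 0)"
    by (simp add: fun_eq_iff Sform1_def \<psi>_def)
  ultimately have \<psi>_in: "\<psi> \<in> Kspace r R"
    by (simp add: Kspace_iff[OF q] Sform2_\<psi>[abs_def] A_def)
  have "(cmod (of_real (K2 r R k) - of_real (K2 r R k0)))\<^sup>2 = (K1 r R k - K1 r R \<bar>k0\<bar>)\<^sup>2" for k
    unfolding cmod_of_real_diff_squared K2_eq_uminus_K1 by (simp add: power2_commute K1_def)
  then have quotient_eq: "S2 r R k * (cmod (snd (\<psi> k)))\<^sup>2
      / (cmod (of_real (K2 r R k) - of_real (K2 r R k0)))\<^sup>2 = indicator A k / (K1 r R k - K1 r R \<bar>k0\<bar>)\<^sup>2" for k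
    using Sform2_\<psi>[of k] by (simp add: Sform2_def)
  have "\<not> integrable lborel (\<lambda>k. indicator A k / (K1 r R k - K1 r R \<bar>k0\<bar>)\<^sup>2)"
    unfolding A_def by (rule not_integrable_inverse_square_K1[OF q abs_ge_zero])
  then show ?thesis
    by (intro in_NP_spectrumI[OF q \<psi>_in disjI2]) (unfold quotient_eq)
qed

lemma zero_in_NP_spectrum:
  assumes q: "0 < crescent_q r R"
  shows "0 \<in> NP_spectrum r R"
proof -
  define A :: "real set" where "A = {1..}"
  define \<psi> where
    "\<psi> k = (complex_of_real (indicator A k * K1 r R k / sqrt (S1 r R k)), 0 :: complex)" for k
  have Sform1_\<psi>: "Sform1 r R \<psi> k = indicator A k * (K1 r R k)\<^sup>2" for k
    unfolding Sform1_def \<psi>_def fst_conv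
    by (subst weighted_norm_normalized) (auto simp: A_def intro: S1_pos[OF q])
  have "(\<lambda>k. indicator A k * (K1 r R k)\<^sup>2)
      = (\<lambda>k. 1/4 * (indicator A k * exp (- (2 * crescent_q r R) * k)))"
    by (auto simp: A_def K1_def power2_eq_square indicator_def simp flip: exp_add)
  then have "integrable lborel (Sform1 r R \<psi>)"
    unfolding Sform1_\<psi>[abs_def] A_def
    using integrable_divide[OF integrable_exp_minus_Ici[of "2 * crescent_q r R" 1], of 4] q by simp
  moreover have "\<psi> \<in> borel_measurable borel"
    unfolding \<psi>_def[abs_def] A_def by measurable
  moreover have "Sform2 r R \<psi> = (\<lambda>_. 0)"
    by (simp add: fun_eq_iff Sform2_def \<psi>_def)
  ultimately have \<psi>_in: "\<psi> \<in> Kspace r R"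
    by (simp add: Kspace_iff[OF q])
  have quotient_eq:
    "S1 r R k * (cmod (fst (\<psi> k)))\<^sup>2 / (cmod (of_real (K1 r R k) - 0))\<^sup>2 = indicator A k" for k
    using Sform1_\<psi>[of k] by (simp add: Sform1_def K1_def)
  show ?thesis
    by (rule in_NP_spectrumI[OF q \<psi>_in disjI1])
      (unfold quotient_eq A_def, rule not_integrable_indicator_Ici)
qed

lemma NP_spectrum_eq:
  assumes q: "0 < crescent_q r R"
  shows "NP_spectrum r R = complex_of_real ` {-1/2 .. 1/2}"
proof
  show "complex_of_real ` {-1/2 .. 1/2} \<subseteq> NP_spectrum r R"
  proof
    fix c assume "c \<in> complex_of_real ` {-1/2 .. 1/2}"
    then obtain t where t: "-1/2 \<le> t" "t \<le> 1/2" and c: "c = complex_of_real t"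
      by auto
    consider "t < 0" | "t = 0" | "0 < t"
      by linarith
    then show "c \<in> NP_spectrum r R"
    proof cases
      case 1
      then show ?thesis
        using K1_in_NP_spectrum[OF q] K1_attains[OF q t(1) 1] unfolding c by metis
    next
      case 2
      then show ?thesis
        using zero_in_NP_spectrum[OF q] unfolding c by simp
    next
      case 3
      then show ?thesis
        using K2_in_NP_spectrum[OF q] K2_attains[OF q 3 t(2)] unfolding c by metis
    qed
  qed
  show "NP_spectrum r R \<subseteq> complex_of_real ` {-1/2 .. 1/2}"
  proof (rule subsetI, rule ccontr)
    fix c assume c: "c \<in> NP_spectrum r R" "c \<notin> complex_of_real ` {-1/2 .. 1/2}"
    have "closed (complex_of_real ` {-1/2 .. 1/2})"
      by (intro compact_imp_closed compact_continuous_image continuous_intros) auto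
    then obtain \<delta> where \<delta>: "0 < \<delta>" "\<And>x. x \<in> {-1/2 .. 1/2} \<Longrightarrow> \<delta> \<le> dist c (complex_of_real x)"
      using separate_point_closed c(2) by (metis (no_types, lifting) imageI)
    have sep: "\<delta> \<le> cmod (complex_of_real x - c)" if "\<bar>x\<bar> \<le> 1/2" for x
    proof -
      have "x \<in> {-1/2 .. 1/2}"
        using that by (auto simp: abs_le_iff)
      from \<delta>(2)[OF this] show ?thesis
        by (simp add: dist_norm norm_minus_commute)
    qed
    have "c \<notin> NP_spectrum r R"
      using not_in_NP_spectrum[OF q \<delta>(1) sep sep] abs_K1_le[OF q] abs_K2_le[OF q] by blast
    with c show False
      by simp
  qed
qed

section \<open>Spectral measures\<close>

text \<open>K1 and K2 are even, so after folding the weights onto the half-lines (see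
  NP_spectral_density) both push-forwards are realised by one map that is injective off 0.\<close>

definition NP_folded_symbol :: "real \<Rightarrow> real \<Rightarrow> real \<Rightarrow> real" where
  "NP_folded_symbol r R k = (if 0 < k then K1 r R k else K2 r R k)"

lemma measurable_NP_folded_symbol [measurable]: "NP_folded_symbol r R \<in> borel_measurable borel"
  unfolding NP_folded_symbol_def by measurable

lemma null_sets_vimage_NP_folded_symbol:
  assumes q: "0 < crescent_q r R" and N: "N \<in> null_sets lborel"
  shows "NP_folded_symbol r R -` N \<in> null_sets lborel"
proof -
  let ?q = "crescent_q r R"
  have "negligible N"
    using N null_setsD2[OF N] by (simp add: negligible_iff_null_sets null_sets_completion_iff)
  have "negligible ({0<..} \<inter> K1 r R -` N)"
  proof (rule negligible_vimage_left_inverse[OF _ \<open>negligible N\<close>])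
    show "- ln (- 2 * K1 r R k) / ?q = k" if "k \<in> {0<..}" for k
      using that q by (simp add: K1_def)
    have "((\<lambda>t. - ln (- 2 * t) / ?q) has_real_derivative - (1 / t) / ?q) (at t)" if "t < 0" for t
      using that q by (auto intro!: derivative_eq_intros simp: field_simps)
    then have "(\<lambda>t. - ln (- 2 * t) / ?q) differentiable at t" if "t < 0" for t
      using that real_differentiable_def by blast
    then show "(\<lambda>t. - ln (- 2 * t) / ?q) differentiable_on K1 r R ` {0<..}"
      by (auto intro!: differentiable_at_imp_differentiable_on simp: K1_def)
  qed simp
  moreover have "negligible ({..<0} \<inter> K2 r R -` N)"
  proof (rule negligible_vimage_left_inverse[OF _ \<open>negligible N\<close>])
    show "ln (2 * K2 r R k) / ?q = k" if "k \<in> {..<0}" for k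
      using that q by (simp add: K2_def)
    have "((\<lambda>t. ln (2 * t) / ?q) has_real_derivative (1 / t) / ?q) (at t)" if "0 < t" for t
      using that q by (auto intro!: derivative_eq_intros simp: field_simps)
    then have "(\<lambda>t. ln (2 * t) / ?q) differentiable at t" if "0 < t" for t
      using that real_differentiable_def by blast
    then show "(\<lambda>t. ln (2 * t) / ?q) differentiable_on K2 r R ` {..<0}"
      by (auto intro!: differentiable_at_imp_differentiable_on simp: K2_def)
  qed simp
  moreover have "NP_folded_symbol r R -` N
      \<subseteq> {0} \<union> ({0<..} \<inter> K1 r R -` N) \<union> ({..<0} \<inter> K2 r R -` N)"
    by (auto simp: NP_folded_symbol_def split: if_splits)
  ultimately have "negligible (NP_folded_symbol r R -` N)"
    by (meson negligible_Un negligible_sing negligible_subset)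
  moreover have "NP_folded_symbol r R -` N \<in> sets lborel"
    using N measurable_sets_borel[OF measurable_NP_folded_symbol] by auto
  ultimately show ?thesis
    by (simp add: negligible_iff_null_sets null_sets_completion_iff)
qed

definition NP_spectral_density :: "real \<Rightarrow> real \<Rightarrow> (real \<Rightarrow> complex \<times> complex) \<Rightarrow> real \<Rightarrow> real" where
  "NP_spectral_density r R \<phi> k =
     indicator {0<..} k * (Sform1 r R \<phi> k + Sform1 r R \<phi> (- k))
   + indicator {..<0} k * (Sform2 r R \<phi> k + Sform2 r R \<phi> (- k))"

definition NP_spectral_measure :: "real \<Rightarrow> real \<Rightarrow> (real \<Rightarrow> complex \<times> complex) \<Rightarrow> real measure" where
  "NP_spectral_measure r R \<phi> =
     distr (density lborel (\<lambda>k. ennreal (NP_spectral_density r R \<phi> k))) borel (NP_folded_symbol r R)"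

lemma sets_NP_spectral_measure [simp]: "sets (NP_spectral_measure r R \<phi>) = sets borel"
  by (simp add: NP_spectral_measure_def)

lemma measurable_NP_spectral_density [measurable]:
  assumes [measurable]: "\<phi> \<in> borel_measurable borel"
  shows "NP_spectral_density r R \<phi> \<in> borel_measurable borel"
  unfolding NP_spectral_density_def Sform1_def Sform2_def by measurable

lemma NP_spectral_density_nonneg: "0 < crescent_q r R \<Longrightarrow> 0 \<le> NP_spectral_density r R \<phi> k"
  by (simp add: NP_spectral_density_def Sform1_nonneg Sform2_nonneg)

lemma integrable_NP_spectral_density:
  assumes q: "0 < crescent_q r R" and \<phi>: "\<phi> \<in> Kspace r R"
  shows "integrable lborel (NP_spectral_density r R \<phi>)"
  using \<phi> integrable_fold[of "Sform1 r R \<phi>" "{0<..}"] integrable_fold[of "Sform2 r R \<phi>" "{..<0}"]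
  unfolding Kspace_iff[OF q] NP_spectral_density_def[abs_def]
  by (auto intro!: Bochner_Integration.integrable_add)

lemma finite_measure_NP_spectral_measure:
  assumes q: "0 < crescent_q r R" and \<phi>: "\<phi> \<in> Kspace r R"
  shows "finite_measure (NP_spectral_measure r R \<phi>)"
proof
  have [measurable]: "\<phi> \<in> borel_measurable borel"
    using \<phi> by (simp add: Kspace_def)
  have "emeasure (NP_spectral_measure r R \<phi>) (space (NP_spectral_measure r R \<phi>))
      = (\<integral>\<^sup>+ k. ennreal (NP_spectral_density r R \<phi> k) \<partial>lborel)"
    by (simp add: NP_spectral_measure_def emeasure_distr emeasure_density NP_spectral_density_def)
  also have "\<dots> = ennreal (integral\<^sup>L lborel (NP_spectral_density r R \<phi>))"
    using integrable_NP_spectral_density[OF q \<phi>] NP_spectral_density_nonneg[OF q]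
    by (intro nn_integral_eq_integral) auto
  finally show "emeasure (NP_spectral_measure r R \<phi>) (space (NP_spectral_measure r R \<phi>)) \<noteq> \<infinity>"
    by simp
qed

lemma absolutely_continuous_NP_spectral_measure:
  assumes q: "0 < crescent_q r R" and \<phi>: "\<phi> \<in> Kspace r R"
  shows "absolutely_continuous lborel (NP_spectral_measure r R \<phi>)"
  unfolding absolutely_continuous_def
proof
  fix N :: "real set" assume N: "N \<in> null_sets lborel"
  have [measurable]: "\<phi> \<in> borel_measurable borel"
    using \<phi> by (simp add: Kspace_def)
  have null: "NP_folded_symbol r R -` N \<in> null_sets lborel"
    by (rule null_sets_vimage_NP_folded_symbol[OF q N])
  have "NP_folded_symbol r R -` N
      \<in> null_sets (density lborel (\<lambda>k. ennreal (NP_spectral_density r R \<phi> k)))"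
    using null AE_not_in[OF null]
    by (subst null_sets_density_iff) (auto elim!: eventually_mono simp: NP_spectral_density_def)
  then show "N \<in> null_sets (NP_spectral_measure r R \<phi>)"
    using N unfolding NP_spectral_measure_def by (subst null_sets_distr_iff) auto
qed

lemma integral_NP_spectral_measure:
  fixes h :: "real \<Rightarrow> 'a::{banach, second_countable_topology}"
  assumes q: "0 < crescent_q r R" and \<phi>: "\<phi> \<in> Kspace r R"
    and h [measurable]: "h \<in> borel_measurable borel" and h_bound: "\<And>t. norm (h t) \<le> B"
  shows "integral\<^sup>L (NP_spectral_measure r R \<phi>) h
    = (\<integral>k. Sform1 r R \<phi> k *\<^sub>R h (K1 r R k) \<partial>lborel) + (\<integral>k. Sform2 r R \<phi> k *\<^sub>R h (K2 r R k) \<partial>lborel)"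
proof -
  have [measurable]: "\<phi> \<in> borel_measurable borel"
    using \<phi> by (simp add: Kspace_def)
  define g1 where "g1 k = Sform1 r R \<phi> k *\<^sub>R h (K1 r R k)" for k
  define g2 where "g2 k = Sform2 r R \<phi> k *\<^sub>R h (K2 r R k)" for k
  have "integrable lborel g1" "integrable lborel g2"
    using \<phi> unfolding g1_def g2_def Kspace_iff[OF q]
    by (auto intro!: integrable_scaleR_bounded h_bound)
  have "integral\<^sup>L (NP_spectral_measure r R \<phi>) h
      = (\<integral>k. NP_spectral_density r R \<phi> k *\<^sub>R h (NP_folded_symbol r R k) \<partial>lborel)"
    unfolding NP_spectral_measure_def
    by (simp add: integral_distr integral_density NP_spectral_density_nonneg[OF q])
  also have "\<dots> = (\<integral>k. indicator {0<..} k *\<^sub>R (g1 k + g1 (- k))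
                    + indicator {..<0} k *\<^sub>R (g2 k + g2 (- k)) \<partial>lborel)"
    by (intro Bochner_Integration.integral_cong)
      (auto simp: NP_spectral_density_def NP_folded_symbol_def g1_def g2_def K1_even K2_even
        scaleR_add_left split: split_indicator)
  also have "\<dots> = integral\<^sup>L lborel g1 + integral\<^sup>L lborel g2"
    using \<open>integrable lborel g1\<close> \<open>integrable lborel g2\<close>
    by (simp add: integrable_fold integral_fold_Ioi integral_fold_Iio)
  finally show ?thesis
    by (simp add: g1_def[abs_def] g2_def[abs_def])
qed

lemma Kinner_resolvent_eq_integral_NP_spectral_measure:
  assumes q: "0 < crescent_q r R" and \<phi>: "\<phi> \<in> Kspace r R" and \<psi>: "\<psi> \<in> Kspace r R"
    and z: "Im z \<noteq> 0" and resolvent: "AE k in lborel. NP_shift r R z \<psi> k = \<phi> k"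
  shows "Kinner r R \<psi> \<phi> = integral\<^sup>L (NP_spectral_measure r R \<phi>) (\<lambda>t. 1 / (complex_of_real t - z))"
proof -
  have [measurable]: "\<phi> \<in> borel_measurable borel" "\<psi> \<in> borel_measurable borel"
    using \<phi> \<psi> by (simp_all add: Kspace_def)
  define h where "h t = 1 / (complex_of_real t - z)" for t
  have h_bound: "norm (h t) \<le> 1 / \<bar>Im z\<bar>" for t
  proof -
    have "\<bar>Im z\<bar> \<le> cmod (complex_of_real t - z)"
      using abs_Im_le_cmod[of "complex_of_real t - z"] by simp
    then show ?thesis
      using z by (simp add: h_def norm_divide frac_le)
  qed
  have h_meas [measurable]: "h \<in> borel_measurable borel"
    unfolding h_def by measurable
  have nonzero: "complex_of_real t - z \<noteq> 0" for t
    using z by (auto simp: complex_eq_iff)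
  have norm_square: "(complex_of_real (cmod w))\<^sup>2 = w * cnj w" for w
    using complex_norm_square[of w] by simp
  have "AE k in lborel.
      complex_of_real (S1 r R k) * fst (\<psi> k) * cnj (fst (\<phi> k))
    + complex_of_real (S2 r R k) * snd (\<psi> k) * cnj (snd (\<phi> k))
    = Sform1 r R \<phi> k *\<^sub>R h (K1 r R k) + Sform2 r R \<phi> k *\<^sub>R h (K2 r R k)"
    using resolvent
  proof eventually_elim
    case (elim k)
    then have "(complex_of_real (K1 r R k) - z) * fst (\<psi> k) = fst (\<phi> k)"
      "(complex_of_real (K2 r R k) - z) * snd (\<psi> k) = snd (\<phi> k)"
      by (auto simp: NP_shift_def prod_eq_iff)
    then have "fst (\<psi> k) = fst (\<phi> k) * h (K1 r R k)" "snd (\<psi> k) = snd (\<phi> k) * h (K2 r R k)"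
      using nonzero by (auto simp: h_def nonzero_eq_divide_eq mult.commute)
    then show ?case
      by (simp add: Sform1_def Sform2_def scaleR_conv_of_real norm_square mult_ac)
  qed
  then have "Kinner r R \<psi> \<phi>
      = (\<integral>k. Sform1 r R \<phi> k *\<^sub>R h (K1 r R k) + Sform2 r R \<phi> k *\<^sub>R h (K2 r R k) \<partial>lborel)"
    unfolding Kinner_def by (intro integral_cong_AE) simp_all
  also have "\<dots> = (\<integral>k. Sform1 r R \<phi> k *\<^sub>R h (K1 r R k) \<partial>lborel)
      + (\<integral>k. Sform2 r R \<phi> k *\<^sub>R h (K2 r R k) \<partial>lborel)"
    using \<phi> unfolding Kspace_iff[OF q]
    by (intro Bochner_Integration.integral_add integrable_scaleR_bounded[OF _ _ h_bound]) simp_all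
  also have "\<dots> = integral\<^sup>L (NP_spectral_measure r R \<phi>) h"
    by (rule integral_NP_spectral_measure[OF q \<phi> h_meas h_bound, symmetric])
  finally show ?thesis
    by (simp add: h_def[abs_def])
qed

lemma NP_purely_ac_if_crescent_q_pos:
  assumes q: "0 < crescent_q r R"
  shows "NP_purely_ac r R"
  unfolding NP_purely_ac_def
proof
  fix \<phi> assume \<phi>: "\<phi> \<in> Kspace r R"
  show "\<exists>\<mu>. sets \<mu> = sets borel \<and> finite_measure \<mu> \<and> absolutely_continuous lborel \<mu> \<and>
      (\<forall>z \<psi>. Im z \<noteq> 0 \<longrightarrow> \<psi> \<in> Kspace r R \<longrightarrow> (AE k in lborel. NP_shift r R z \<psi> k = \<phi> k) \<longrightarrow>
          Kinner r R \<psi> \<phi> = integral\<^sup>L \<mu> (\<lambda>t. 1 / (complex_of_real t - z)))"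
    using finite_measure_NP_spectral_measure[OF q \<phi>]
      absolutely_continuous_NP_spectral_measure[OF q \<phi>]
      Kinner_resolvent_eq_integral_NP_spectral_measure[OF q \<phi>]
    by (intro exI[of _ "NP_spectral_measure r R \<phi>"]) simp
qed

theorem theorem3p7:
  fixes r R :: real
  assumes "0 < r" and "r < R"
  shows "NP_purely_ac r R \<and> NP_spectrum r R = complex_of_real ` {-1/2 .. 1/2}"
proof -
  have "1 / (2 * R) < 1 / (2 * r)"
    using assms by (simp add: frac_less2)
  then have q: "0 < crescent_q r R"
    by (simp add: crescent_q_def)
  show ?thesis
    using NP_purely_ac_if_crescent_q_pos[OF q] NP_spectrum_eq[OF q] by simp
qed

end
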